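(* For every integer $k>2$, $N(2k+6,k)=2$ if $k\equiv1\pmod 3$ and $N(2k+6,k)=0$ if $k\not\equiv1\pmod3$.
   Context: For $n>k\ge1$, $N(n,k)$ is the nullity of the $n\times n$ skew-symmetric Toeplitz matrix $A(n,k)$ whose first $k$ superdiagonals have all entries $1$ and whose remaining superdiagonals have all entries $0$. *)

theory Defs
  imports "Jordan_Normal_Form.Matrix_Kernel"
begin

definition A_mat :: "nat \<Rightarrow> nat \<Rightarrow> real mat" where
  "A_mat n k = mat n n (\<lambda>(i, j).
      if i < j \<and> j - i \<le> k then 1
      else if j < i \<and> i - j \<le> k then -1
      else 0)"

definition N_null :: "nat \<Rightarrow> nat \<Rightarrow> nat" where
  "N_null n k = kernel_dim (A_mat n k)"

end

(* Extend a kernel vector x of A(n,k) by zeros to a sequence f on the naturals.  Row i of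
   A(n,k) x is the sum of the k entries to the right of i minus the k entries to its left, so
   subtracting consecutive rows turns A(n,k) x = 0 into the recurrence
   f (i + k + 1) = f i + f (i + 1) - f (i - k) (for i + 1 < n), plus f 1 + ... + f k = 0 from
   row 0.  Thus f is determined by f 0, ..., f k, and the kernel is cut out by the conditions
   f j = 0 for n <= j < n + k.  For n = 2k + 6 these conditions force f to be 3-periodic with
   zero period sum on [4, k], and the five remaining ones, together with row 0, leave exactly
   the two parameters f 0, f 1 free when k = 1 (mod 3) and none otherwise.  Running the
   recurrence from suitable initial values produces the two kernel vectors in that case. *)

theory Submission
  imports Defs
begin

section \<open>Kernel dimension via coordinates\<close>

lemma mat_kernel_diff:
  assumes A: "A \<in> carrier_mat m n" and x: "x \<in> mat_kernel A" and y: "y \<in> mat_kernel A"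
  shows "x - y \<in> mat_kernel A"
proof -
  have "x \<in> carrier_vec n" "y \<in> carrier_vec n" "A *\<^sub>v x = 0\<^sub>v m" "A *\<^sub>v y = 0\<^sub>v m"
    using mat_kernelD[OF A x] mat_kernelD[OF A y] by auto
  then show ?thesis
    by (intro mat_kernelI[OF A]) (auto simp: mult_minus_distrib_mat_vec[OF A])
qed

lemma kernel_dim_eq_card:
  fixes A :: "'a::field mat"
  assumes A: "A \<in> carrier_mat m n" and P: "P \<subseteq> {..<n}"
    and u_kernel: "\<And>p. p \<in> P \<Longrightarrow> u p \<in> mat_kernel A"
    and u_coord: "\<And>p q. p \<in> P \<Longrightarrow> q \<in> P \<Longrightarrow> u p $ q = (if p = q then 1 else 0)"
    and determined: "\<And>x. x \<in> mat_kernel A \<Longrightarrow> \<forall>p\<in>P. x $ p = 0 \<Longrightarrow> x = 0\<^sub>v n"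
  shows "kernel_dim A = card P"
proof -
  interpret kernel m n A by (unfold_locales, rule A)
  have fin: "finite P" using P finite_subset by blast
  have inj: "inj_on u P"
    by (rule inj_onI) (metis u_coord one_neq_zero)
  have sub: "u ` P \<subseteq> mat_kernel A" using u_kernel by blast
  have coord: "lincomb c (u ` P) $ q = c (u q)" if q: "q \<in> P" for c q
  proof -
    have "lincomb c (u ` P) $ q = (\<Sum>v\<in>u ` P. c v * v $ q)"
      using lincomb_index[OF _ sub] q P by blast
    also have "\<dots> = (\<Sum>p\<in>P. if p = q then c (u p) else 0)"
      by (auto simp: sum.reindex[OF inj] u_coord q intro!: sum.cong)
    also have "\<dots> = c (u q)" using fin q by simp
    finally show ?thesis .
  qed
  have indpt: "lin_indpt (u ` P)"
  proof (rule Ker.finite_lin_indpt2[OF finite_imageI[OF fin] sub])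
    fix c assume "lincomb c (u ` P) = 0\<^sub>v n"
    then show "\<forall>v\<in>u ` P. c v = 0" using coord P by (metis imageE index_zero_vec(1) lessThan_iff subsetD)
  qed
  have "mat_kernel A \<subseteq> span (u ` P)"
  proof
    fix x assume x: "x \<in> mat_kernel A"
    define c where "c v = x $ inv_into P u v" for v
    have l: "lincomb c (u ` P) \<in> mat_kernel A" using Ker.lincomb_closed[OF sub] by simp
    have xc: "x \<in> carrier_vec n" and lc: "lincomb c (u ` P) \<in> carrier_vec n"
      using mat_kernel_carrier[OF A] x l by auto
    have "x - lincomb c (u ` P) = 0\<^sub>v n"
    proof (rule determined[OF mat_kernel_diff[OF A x l]], intro ballI)
      fix p assume p: "p \<in> P"
      then have "p < n" using P by auto
      then show "(x - lincomb c (u ` P)) $ p = 0"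
        using xc lc coord[OF p] by (simp add: c_def inv_into_f_f[OF inj p])
    qed
    then have "x = lincomb c (u ` P)"
      using xc lc by (auto simp: vec_eq_iff)
    then show "x \<in> span (u ` P)"
      using Ker.finite_span[OF finite_imageI[OF fin] sub] by auto
  qed
  then have "basis (u ` P)"
    unfolding Ker.basis_def using indpt sub Ker.span_is_subset2[OF sub] by auto
  then show ?thesis
    using Ker.dim_basis[OF finite_imageI[OF fin]] card_image[OF inj] by simp
qed

section \<open>The kernel of A(n,k) as a linear recurrence\<close>

definition zero_ext :: "real vec \<Rightarrow> nat \<Rightarrow> real" where
  "zero_ext x j = (if j < dim_vec x then x $ j else 0)"

lemma A_mat_mult_vec_nth:
  assumes x: "x \<in> carrier_vec n" and i: "i < n"
  shows "(A_mat n k *\<^sub>v x) $ i = sum (zero_ext x) {Suc i..<Suc (i + k)} - sum (zero_ext x) {i - k..<i}"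
proof -
  let ?f = "zero_ext x" and ?R = "{Suc i..<Suc (i + k)}" and ?L = "{i - k..<i}"
  have "(A_mat n k *\<^sub>v x) $ i = (\<Sum>j<n. (if j \<in> ?R then ?f j else 0) - (if j \<in> ?L then ?f j else 0))"
    using x i unfolding A_mat_def zero_ext_def
    by (auto simp: scalar_prod_def lessThan_atLeast0 intro!: sum.cong)
  also have "\<dots> = sum ?f ({..<n} \<inter> ?R) - sum ?f ({..<n} \<inter> ?L)"
    by (simp add: sum_subtractf sum.inter_restrict)
  also have "sum ?f ({..<n} \<inter> ?R) = sum ?f ?R"
    using x by (intro sum.mono_neutral_left) (auto simp: zero_ext_def)
  also have "{..<n} \<inter> ?L = ?L" using i by auto
  finally show ?thesis .
qed

text \<open>Row \<open>i + 1\<close> minus row \<open>i\<close> of \<open>A(n,k) x = 0\<close>, for \<open>f\<close> the zero extension of \<open>x\<close>;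
  the term \<open>f (i - k)\<close> is absent while \<open>i < k\<close>.\<close>
definition band_rec :: "nat \<Rightarrow> (nat \<Rightarrow> real) \<Rightarrow> nat \<Rightarrow> bool" where
  "band_rec k f i \<longleftrightarrow> f (i + k + 1) + (if k \<le> i then f (i - k) else 0) = f i + f (Suc i)"

lemma row_sum_step_iff:
  fixes f :: "nat \<Rightarrow> real" and k :: nat
  defines "rowsum i \<equiv> sum f {Suc i..<Suc (i + k)} - sum f {i - k..<i}"
  shows "rowsum (Suc i) = rowsum i \<longleftrightarrow> band_rec k f i"
proof -
  have right: "sum f {Suc (Suc i)..<Suc (Suc i + k)} = sum f {Suc i..<Suc (i + k)} - f (Suc i) + f (i + k + 1)"
    using sum.atLeast_Suc_lessThan[of "Suc i" "Suc (Suc i + k)" f]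
      sum.atLeastLessThan_Suc[of "Suc i" "Suc (i + k)" f] by simp
  have left: "sum f {Suc i - k..<Suc i} = sum f {i - k..<i} - (if k \<le> i then f (i - k) else 0) + f i"
  proof (cases "k \<le> i")
    case True
    have a: "sum f {i - k..<Suc i} = f (i - k) + sum f {Suc (i - k)..<Suc i}"
      by (rule sum.atLeast_Suc_lessThan) simp
    have b: "sum f {i - k..<Suc i} = sum f {i - k..<i} + f i"
      by (rule sum.atLeastLessThan_Suc) simp
    have "Suc i - k = Suc (i - k)" using True by simp
    with True a b show ?thesis by simp
  next
    case False
    then have "Suc i - k = 0" "i - k = 0" by simp_all
    with False show ?thesis by (simp add: sum.atLeastLessThan_Suc)
  qed
  show ?thesis unfolding rowsum_def band_rec_def right left by auto
qed

lemma all_zero_iff_first_and_steps: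
  fixes g :: "nat \<Rightarrow> 'a::zero" and n :: nat
  shows "(\<forall>i<n. g i = 0) \<longleftrightarrow> (0 < n \<longrightarrow> g 0 = 0) \<and> (\<forall>i. Suc i < n \<longrightarrow> g (Suc i) = g i)"
proof
  assume "\<forall>i<n. g i = 0"
  then show "(0 < n \<longrightarrow> g 0 = 0) \<and> (\<forall>i. Suc i < n \<longrightarrow> g (Suc i) = g i)" by auto
next
  assume steps: "(0 < n \<longrightarrow> g 0 = 0) \<and> (\<forall>i. Suc i < n \<longrightarrow> g (Suc i) = g i)"
  show "\<forall>i<n. g i = 0"
  proof (intro allI impI)
    fix i assume "i < n"
    with steps show "g i = 0" by (induction i) auto
  qed
qed

locale band_seq =
  fixes k n :: nat and f :: "nat \<Rightarrow> real"
  assumes rec: "Suc i < n \<Longrightarrow> band_rec k f i"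

locale kernel_seq = band_seq +
  assumes vanish: "n \<le> j \<Longrightarrow> f j = 0"
    and initial_sum: "sum f {1..k} = 0"

lemma A_mat_kernel_iff:
  assumes x: "x \<in> carrier_vec n" and n: "0 < n"
  shows "x \<in> mat_kernel (A_mat n k) \<longleftrightarrow> kernel_seq k n (zero_ext x)"
proof -
  let ?f = "zero_ext x"
  define rowsum where "rowsum i = sum ?f {Suc i..<Suc (i + k)} - sum ?f {i - k..<i}" for i
  have A: "A_mat n k \<in> carrier_mat n n" by (simp add: A_mat_def)
  have "x \<in> mat_kernel (A_mat n k) \<longleftrightarrow> (\<forall>i<n. (A_mat n k *\<^sub>v x) $ i = 0)"
    using mat_kernel[OF A] x A by (auto simp: vec_eq_iff)
  also have "\<dots> \<longleftrightarrow> (\<forall>i<n. rowsum i = 0)"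
    using A_mat_mult_vec_nth[OF x] by (simp add: rowsum_def)
  also have "\<dots> \<longleftrightarrow> sum ?f {1..k} = 0 \<and> (\<forall>i. Suc i < n \<longrightarrow> band_rec k ?f i)"
    unfolding all_zero_iff_first_and_steps rowsum_def row_sum_step_iff
    using n by (simp add: atLeastLessThanSuc_atLeastAtMost)
  also have "\<dots> \<longleftrightarrow> kernel_seq k n ?f"
    using x by (auto simp: kernel_seq_def kernel_seq_axioms_def band_seq_def zero_ext_def)
  finally show ?thesis .
qed

context band_seq
begin

text \<open>Indices are passed as variables constrained by equations, so that these lemmas apply by
  \<open>rule\<close> to numeral and symbolic indices alike (the simplifier normalises index expressions
  such as \<open>1 + 2\<close> or \<open>3 * k + 3 + 1\<close> differently from \<open>3\<close> or \<open>3 * k + 4\<close>).\<close>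

lemma step_low:
  "i < k \<Longrightarrow> Suc i < n \<Longrightarrow> m = k + 1 + i \<Longrightarrow> i' = i + 1 \<Longrightarrow> f m = f i + f i'"
  using rec[of i] by (simp add: band_rec_def ac_simps)

lemma step_high:
  "k \<le> i \<Longrightarrow> Suc i < n \<Longrightarrow> m = i + k + 1 \<Longrightarrow> i' = i + 1 \<Longrightarrow> l = i - k \<Longrightarrow>
    f m = f i + f i' - f l"
  using rec[of i] by (simp add: band_rec_def)

lemma rec_2k1: "0 < k \<Longrightarrow> 2 * k + 1 < n + k \<Longrightarrow> f (2 * k + 1) = f k + f 1"
  using step_high[of k "2 * k + 1" "k + 1" 0] step_low[of 0 "k + 1" 1] by simp

lemma rec_triple:
  assumes "j + 2 \<le> k" "m = 2 * k + 2 + j" "m < n + k" "j1 = j + 1" "j2 = j + 2"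
  shows "f m = f j + f j1 + f j2"
proof -
  have "f m = f (k + 1 + j) + f (k + 2 + j) - f j1" by (rule step_high) (use assms in auto)
  moreover have "f (k + 1 + j) = f j + f j1" by (rule step_low) (use assms in auto)
  moreover have "f (k + 2 + j) = f j1 + f j2" by (rule step_low) (use assms in auto)
  ultimately show ?thesis by linarith
qed

lemma rec_3k1: "0 < k \<Longrightarrow> 3 * k + 1 < n + k \<Longrightarrow> f (3 * k + 1) = f (k - 1) + f k + f 1"
  using step_high[of "2 * k" "3 * k + 1" "2 * k + 1" k] step_low[of "k - 1" "2 * k" k] rec_2k1
  by simp

lemma rec_3k2:
  assumes "2 \<le> k" "3 * k + 2 < n + k"
  shows "f (3 * k + 2) = f k + f 1 + f 2"
proof -
  have "f (3 * k + 2) = f (2 * k + 1) + f (2 * k + 2) - f (k + 1)"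
    by (rule step_high) (use assms in auto)
  moreover have "f (2 * k + 2) = f 0 + f 1 + f 2" by (rule rec_triple) (use assms in auto)
  moreover have "f (k + 1) = f 0 + f 1" by (rule step_low) (use assms in auto)
  ultimately show ?thesis using rec_2k1 assms by simp
qed

lemma rec_quadruple:
  assumes "j + 3 \<le> k" "m = 3 * k + 3 + j" "m < n + k" "j1 = j + 1" "j2 = j + 2" "j3 = j + 3"
  shows "f m = f j + f j1 + f j2 + f j3"
proof -
  have "f m = f (2 * k + 2 + j) + f (2 * k + 3 + j) - f (k + 2 + j)"
    by (rule step_high) (use assms in auto)
  moreover have "f (2 * k + 2 + j) = f j + f j1 + f j2" by (rule rec_triple) (use assms in auto)
  moreover have "f (2 * k + 3 + j) = f j1 + f j2 + f j3" by (rule rec_triple) (use assms in auto)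
  moreover have "f (k + 2 + j) = f j1 + f j2" by (rule step_low) (use assms in auto)
  ultimately show ?thesis by linarith
qed

lemma zero_from_initial:
  assumes "0 < k" and initial: "\<And>j. j \<le> k \<Longrightarrow> f j = 0"
  shows "j < n + k \<Longrightarrow> f j = 0"
proof (induction j rule: less_induct)
  case (less j)
  show ?case
  proof (cases "j \<le> k")
    case False
    define i where "i = j - k - 1"
    have i: "j = i + k + 1" "Suc i < n" using False less.prems by (auto simp: i_def)
    then have "f j = f i + f (i + 1) - (if k \<le> i then f (i - k) else 0)"
      using rec[of i] by (simp add: band_rec_def)
    also have "\<dots> = 0" using less.IH i \<open>0 < k\<close> by auto
    finally show ?thesis .
  qed (rule initial)
qed

end

lemma (in kernel_seq) zero_if_initial_zero:
  assumes "0 < k" "\<And>j. j \<le> k \<Longrightarrow> f j = 0"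
  shows "f j = 0"
  using zero_from_initial[OF assms, of j] vanish[of j] by linarith

definition period3 :: "real \<Rightarrow> real \<Rightarrow> nat \<Rightarrow> real" where
  "period3 a b j = (if j mod 3 = 0 then a else if j mod 3 = 1 then b else - (a + b))"

lemma period3_triple: "period3 a b j + period3 a b (j + 1) + period3 a b (j + 2) = 0"
  using mod_less_divisor[of 3 j] unfolding period3_def by (auto simp: mod_Suc)

lemma period3_mult3_add: "period3 a b (3 * q + j) = period3 a b j"
  unfolding period3_def by simp

lemma sum_period3:
  "(\<Sum>i<m. period3 a b i) = (if m mod 3 = 0 then 0 else if m mod 3 = 1 then a else a + b)"
proof (induction m)
  case (Suc m)
  then show ?case using mod_less_divisor[of 3 m] by (auto simp: period3_def mod_Suc)
qed simp

lemma three_periodic: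
  fixes g :: "nat \<Rightarrow> real"
  assumes triple: "\<And>j. lo \<le> j \<Longrightarrow> j + 2 \<le> hi \<Longrightarrow> g j + g (j + 1) + g (j + 2) = 0"
  shows "lo \<le> j \<Longrightarrow> j \<le> hi \<Longrightarrow> g j = period3 (g lo) (g (Suc lo)) (j - lo)"
proof (induction j rule: less_induct)
  case (less j)
  show ?case
  proof (cases "j \<le> Suc lo")
    case True
    with less.prems have "j = lo \<or> j = Suc lo" by auto
    then show ?thesis by (auto simp: period3_def)
  next
    case False
    define i where "i = j - 2"
    have i: "lo \<le> i" "j = i + 2" using False by (auto simp: i_def)
    have "g i + g (i + 1) + g (i + 2) = 0" using i less.prems(2) by (intro triple) linarith+
    moreover have "g i = period3 (g lo) (g (Suc lo)) (i - lo)"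
      by (rule less.IH) (use i less.prems in auto)
    moreover have "g (i + 1) = period3 (g lo) (g (Suc lo)) (i + 1 - lo)"
      by (rule less.IH) (use i less.prems in auto)
    moreover have "i + 1 - lo = i - lo + 1" "i - lo + 2 = j - lo" using i by auto
    moreover note period3_triple[of "g lo" "g (Suc lo)" "i - lo"]
    ultimately show ?thesis using i by simp
  qed
qed

lemma sum_split_first_three:
  fixes g :: "nat \<Rightarrow> real"
  assumes "3 \<le> k"
  shows "sum g {1..k} = g 1 + g 2 + g 3 + (\<Sum>i<k - 3. g (i + 4))"
  using assms
proof (induction k rule: dec_induct)
  case base
  show ?case by (simp add: eval_nat_numeral)
next
  case (step k)
  then have "Suc k - 3 = Suc (k - 3)" "k - 3 + 4 = Suc k" by simp_all
  with step show ?case by simp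
qed

section \<open>Kernel vectors of A(2k+6,k): uniqueness\<close>

context kernel_seq
begin

text \<open>For \<open>k = 3, 4\<close> the block \<open>[4, k]\<close> is too short for the periodicity argument below,
  and the linear system is solved directly.\<close>

lemma initial_zero_k3:
  assumes k: "k = 3" and n: "n = 12"
  shows "f 0 = 0 \<and> f 1 = 0 \<and> f 2 = 0 \<and> f 3 = 0"
proof -
  have "f 6 = f 2 + f 3" by (rule step_low) (use k n in auto)
  moreover have "f 7 = f 3 + f 1" using rec_2k1 k n by simp
  moreover have "f 9 = f 1 + f 2 + f 3" by (rule rec_triple) (use k n in auto)
  moreover have "f 10 = f 2 + f 3 + f 1" using rec_3k1 k n by simp
  moreover have "f 11 = f 3 + f 1 + f 2" using rec_3k2 k n by simp
  moreover have "f 12 = f 0 + f 1 + f 2 + f 3" by (rule rec_quadruple) (use k n in auto)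
  moreover have "f 13 = f 9 + f 10 - f 6" by (rule step_high) (use k n in auto)
  moreover have "f 14 = f 10 + f 11 - f 7" by (rule step_high) (use k n in auto)
  moreover have "f 12 = 0" "f 13 = 0" "f 14 = 0" by (simp_all add: vanish n)
  moreover have "f 1 + f 2 + f 3 = 0" using initial_sum sum_split_first_three[of k f] k by simp
  ultimately show ?thesis by linarith
qed

lemma initial_zero_k4:
  assumes k: "k = 4" and n: "n = 14" and pinned: "f 0 = 0" "f 1 = 0"
  shows "f 2 = 0 \<and> f 3 = 0 \<and> f 4 = 0"
proof -
  have "f 14 = f 4 + f 1 + f 2" using rec_3k2 k n by simp
  moreover have "f 15 = f 0 + f 1 + f 2 + f 3" by (rule rec_quadruple) (use k n in auto)
  moreover have "f 14 = 0" "f 15 = 0" by (simp_all add: vanish n)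
  moreover have "f 1 + f 2 + f 3 + f 4 = 0" using initial_sum sum_split_first_three[of k f] k by simp
  ultimately show ?thesis using pinned by linarith
qed

lemma periodic_middle:
  assumes n: "n = 2 * k + 6"
  shows "4 \<le> j \<Longrightarrow> j \<le> k \<Longrightarrow> f j = period3 (f 4) (f 5) (j - 4)"
proof -
  have triple: "f j + f (j + 1) + f (j + 2) = 0" if "4 \<le> j" "j + 2 \<le> k" for j
  proof -
    have "f (2 * k + 2 + j) = f j + f (j + 1) + f (j + 2)" by (rule rec_triple) (use that n in auto)
    moreover have "f (2 * k + 2 + j) = 0" by (rule vanish) (use that n in auto)
    ultimately show ?thesis by linarith
  qed
  show "f j = period3 (f 4) (f 5) (j - 4)" if "4 \<le> j" "j \<le> k"
  proof -
    have "f j = period3 (f 4) (f (Suc 4)) (j - 4)"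
      by (rule three_periodic[where lo = 4 and hi = k and g = f]) (fact triple that)+
    then show ?thesis by simp
  qed
qed

lemma tail_equations:
  assumes n: "n = 2 * k + 6" and k: "5 \<le> k"
  shows "f (k - 1) + f k + f 1 = 0" "f k + f 1 + f 2 = 0" "f 0 + f 1 + f 2 + f 3 = 0"
    "f 1 + f 2 + f 3 + f 4 = 0" "f 2 + f 3 + f 4 + f 5 = 0"
proof -
  show "f (k - 1) + f k + f 1 = 0" using rec_3k1 vanish[of "3 * k + 1"] n k by simp
  show "f k + f 1 + f 2 = 0" using rec_3k2 vanish[of "3 * k + 2"] n k by simp
  have "f (3 * k + 3) = f 0 + f 1 + f 2 + f 3" by (rule rec_quadruple) (use n k in auto)
  then show "f 0 + f 1 + f 2 + f 3 = 0" using vanish[of "3 * k + 3"] n k by simp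
  have "f (3 * k + 4) = f 1 + f 2 + f 3 + f 4" by (rule rec_quadruple) (use n k in auto)
  then show "f 1 + f 2 + f 3 + f 4 = 0" using vanish[of "3 * k + 4"] n k by simp
  have "f (3 * k + 5) = f 2 + f 3 + f 4 + f 5" by (rule rec_quadruple) (use n k in auto)
  then show "f 2 + f 3 + f 4 + f 5 = 0" using vanish[of "3 * k + 5"] n k by simp
qed

lemma initial_sum_periodic:
  assumes n: "n = 2 * k + 6" and k: "3 \<le> k"
  shows "f 1 + f 2 + f 3 + sum (period3 (f 4) (f 5)) {..<k - 3} = 0"
proof -
  have "sum f {1..k} = f 1 + f 2 + f 3 + (\<Sum>i<k - 3. f (i + 4))"
    using sum_split_first_three[of k f] k by simp
  also have "(\<Sum>i<k - 3. f (i + 4)) = sum (period3 (f 4) (f 5)) {..<k - 3}"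
  proof (rule sum.cong)
    fix i assume "i \<in> {..<k - 3}"
    then show "f (i + 4) = period3 (f 4) (f 5) i" using periodic_middle[OF n, of "i + 4"] by simp
  qed simp
  finally show ?thesis using initial_sum by simp
qed

lemma first_six_zero:
  assumes n: "n = 2 * k + 6" and k: "5 \<le> k" and pinned: "k mod 3 = 1 \<Longrightarrow> f 0 = 0 \<and> f 1 = 0"
  shows "f 0 = 0 \<and> f 1 = 0 \<and> f 2 = 0 \<and> f 3 = 0 \<and> f 4 = 0 \<and> f 5 = 0"
proof -
  define e where "e = k - 5"
  have k_eq: "k = e + 5" and "k - 3 = e + 2" using k by (simp_all add: e_def)
  note tail = tail_equations[OF n k]
  have top: "f k = period3 (f 4) (f 5) (e + 1)" "f (k - 1) = period3 (f 4) (f 5) e"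
    using periodic_middle[OF n, of k] periodic_middle[OF n, of "k - 1"] k_eq by simp_all
  have "f 1 + f 2 + f 3 + sum (period3 (f 4) (f 5)) {..<k - 3} = 0"
    using initial_sum_periodic[OF n] k by simp
  then have sum: "f 1 + f 2 + f 3 +
      (if (e + 2) mod 3 = 0 then 0 else if (e + 2) mod 3 = 1 then f 4 else f 4 + f 5) = 0"
    by (simp only: sum_period3 \<open>k - 3 = e + 2\<close>)
  consider "e mod 3 = 0" | "e mod 3 = 1" | "e mod 3 = 2"
    using mod_less_divisor[of 3 e] by linarith
  then show ?thesis
  proof cases
    case 1
    then have "f k = f 5" "f (k - 1) = f 4" "f 1 + f 2 + f 3 + f 4 + f 5 = 0"
      using top sum by (simp_all add: period3_def mod_Suc)
    then show ?thesis using tail by (intro conjI; linarith)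
  next
    case 2
    then have "f k = - (f 4 + f 5)" "f (k - 1) = f 5" "f 1 + f 2 + f 3 = 0"
      using top sum by (simp_all add: period3_def mod_Suc)
    then show ?thesis using tail by (intro conjI; linarith)
  next
    case 3
    then have "f k = f 4" "f (k - 1) = - (f 4 + f 5)"
      using top by (simp_all add: period3_def mod_Suc)
    moreover have "k mod 3 = 1" using k_eq 3 mod_add_left_eq[of e 3 5] by simp
    then have "f 0 = 0" "f 1 = 0" using pinned by simp_all
    ultimately show ?thesis using tail by (intro conjI; linarith)
  qed
qed

lemma initial_zero_ge5:
  assumes n: "n = 2 * k + 6" and k: "5 \<le> k" and pinned: "k mod 3 = 1 \<Longrightarrow> f 0 = 0 \<and> f 1 = 0"
    and j: "j \<le> k"
  shows "f j = 0"
proof (cases "4 \<le> j")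
  case True
  then show ?thesis
    using periodic_middle[OF n, of j] first_six_zero[OF n k pinned] j by (simp add: period3_def)
next
  case False
  then have "j = 0 \<or> j = 1 \<or> j = 2 \<or> j = 3" by auto
  then show ?thesis using first_six_zero[OF n k pinned] by auto
qed

end

section \<open>Kernel vectors of A(2k+6,k): existence for k = 1 (mod 3)\<close>

text \<open>The guard \<open>k = 0\<close> only serves termination.\<close>
fun band_solution :: "nat \<Rightarrow> (nat \<Rightarrow> real) \<Rightarrow> nat \<Rightarrow> real" where
  "band_solution k a m =
    (if m \<le> k \<or> k = 0 then a m
     else band_solution k a (m - k - 1) + band_solution k a (m - k)
       - (if 2 * k + 1 \<le> m then band_solution k a (m - 2 * k - 1) else 0))"

declare band_solution.simps [simp del]

lemma band_solution_initial: "m \<le> k \<Longrightarrow> band_solution k a m = a m"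
  by (simp add: band_solution.simps)

lemma band_rec_band_solution:
  assumes "0 < k"
  shows "band_rec k (band_solution k a) i"
proof -
  have "band_solution k a (i + k + 1) = band_solution k a i + band_solution k a (Suc i)
      - (if k \<le> i then band_solution k a (i - k) else 0)"
    using assms by (subst band_solution.simps) simp
  then show ?thesis by (simp add: band_rec_def)
qed

lemma band_seq_band_solution: "0 < k \<Longrightarrow> band_seq k n (band_solution k a)"
  by unfold_locales (rule band_rec_band_solution)

text \<open>A 3-periodic zero-sum pattern with a \<open>0\<close> inserted at position 3.  Once \<open>f 0 = a\<close> and
  \<open>f 1 = b\<close>, the equations of \<open>periodic_middle\<close> and \<open>tail_equations\<close> leave no other choice
  for \<open>f 0, ..., f k\<close>.\<close>
definition kernel_init :: "real \<Rightarrow> real \<Rightarrow> nat \<Rightarrow> real" where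
  "kernel_init a b j = (if j < 3 then period3 a b j else if j = 3 then 0 else period3 a b (j - 4))"

lemma band_solution_kernel_init_values:
  fixes k :: nat and a b :: real
  assumes k: "4 \<le> k" "k mod 3 = 1"
  defines "g \<equiv> band_solution k (kernel_init a b)"
  shows "g 0 = a" "g 1 = b" "g 2 = - (a + b)" "g 3 = 0" "g 4 = a" "g k = a"
    and "5 \<le> k \<Longrightarrow> g 5 = b" "5 \<le> k \<Longrightarrow> g (k - 1) = - (a + b)"
    and "j = i + 4 \<Longrightarrow> j \<le> k \<Longrightarrow> g j = period3 a b i"
proof -
  have init: "g j = kernel_init a b j" if "j \<le> k" for j
    using that by (simp add: g_def band_solution_initial)
  then show "g 0 = a" "g 1 = b" "g 2 = - (a + b)" "g 3 = 0" "g 4 = a"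
    using k by (simp_all add: kernel_init_def period3_def)
  show "5 \<le> k \<Longrightarrow> g 5 = b" using init by (simp add: kernel_init_def period3_def)
  show "j = i + 4 \<Longrightarrow> j \<le> k \<Longrightarrow> g j = period3 a b i" using init by (simp add: kernel_init_def)
  have q: "k = 3 * (k div 3) + 1" using k(2) div_mult_mod_eq[of k 3] by linarith
  show "g k = a"
  proof -
    have "g k = period3 a b (k - 4)" using init[of k] k(1) by (simp add: kernel_init_def)
    also have "k - 4 = 3 * (k div 3 - 1)" using q k(1) by linarith
    finally show ?thesis by (simp add: period3_def)
  qed
  show "g (k - 1) = - (a + b)" if "5 \<le> k"
  proof -
    have "\<not> k - 1 < 3" "k - 1 \<noteq> 3" using that by simp_all
    then have "g (k - 1) = period3 a b (k - 5)" using init[of "k - 1"] by (simp add: kernel_init_def)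
    also have "k - 5 = 3 * (k div 3 - 2) + 2" using q that by linarith
    also have "period3 a b \<dots> = period3 a b 2" by (rule period3_mult3_add)
    finally show ?thesis by (simp add: period3_def)
  qed
qed

lemma band_solution_kernel_init_vanish_middle:
  assumes k: "4 \<le> k" "k mod 3 = 1" and i: "i + 6 \<le> k"
  shows "band_solution k (kernel_init a b) (2 * k + 6 + i) = 0"
proof -
  define g where "g = band_solution k (kernel_init a b)"
  interpret band_seq k "2 * k + 6" g using k by (simp add: g_def band_seq_band_solution)
  note val = band_solution_kernel_init_values[OF k, where a = a and b = b, folded g_def]
  have "g (2 * k + 6 + i) = g (i + 4) + g (i + 5) + g (i + 6)" by (rule rec_triple) (use i in auto)
  also have "\<dots> = period3 a b i + period3 a b (i + 1) + period3 a b (i + 2)"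
    using val(9)[of "i + 4" i] val(9)[of "i + 5" "i + 1"] val(9)[of "i + 6" "i + 2"] i by simp
  finally show ?thesis using period3_triple by (simp add: g_def)
qed

lemma band_solution_kernel_init_vanish_top:
  assumes k: "4 \<le> k" "k mod 3 = 1" and m: "2 * k + 6 \<le> m" "m < 3 * k + 6" "3 * k < m"
  shows "band_solution k (kernel_init a b) m = 0"
proof -
  define g where "g = band_solution k (kernel_init a b)"
  interpret band_seq k "2 * k + 6" g using k by (simp add: g_def band_seq_band_solution)
  note val = band_solution_kernel_init_values[OF k, where a = a and b = b, folded g_def]
  have "m = 3 * k + 1 \<or> m = 3 * k + 2 \<or> m = 3 * k + 3 \<or> m = 3 * k + 4 \<or> m = 3 * k + 5"
    using m by linarith
  then have "g m = 0"
  proof (elim disjE)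
    assume "m = 3 * k + 1"
    then have "5 \<le> k" using m by linarith
    then have "g (3 * k + 1) = g (k - 1) + g k + g 1" using rec_3k1 by simp
    then show "g m = 0" using val(1-8) \<open>m = 3 * k + 1\<close> \<open>5 \<le> k\<close> by simp
  next
    assume "m = 3 * k + 2"
    have "g (3 * k + 2) = g k + g 1 + g 2" using rec_3k2 k by simp
    then show "g m = 0" using val(1-8) \<open>m = 3 * k + 2\<close> by simp
  next
    assume "m = 3 * k + 3"
    have "g (3 * k + 3) = g 0 + g 1 + g 2 + g 3" by (rule rec_quadruple) (use k in auto)
    then show "g m = 0" using val(1-8) \<open>m = 3 * k + 3\<close> by simp
  next
    assume "m = 3 * k + 4"
    have "g (3 * k + 4) = g 1 + g 2 + g 3 + g 4" by (rule rec_quadruple) (use k in auto)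
    then show "g m = 0" using val(1-8) \<open>m = 3 * k + 4\<close> by simp
  next
    assume m5: "m = 3 * k + 5"
    show "g m = 0"
    proof (cases "k = 4")
      case True
      have "g (3 * k + 5) = g 12 + g 13 - g 8" by (rule step_high) (use True in auto)
      moreover have "g 12 = g 2 + g 3 + g 4" by (rule rec_triple) (use True in auto)
      moreover have "g 13 = g 3 + g 4 + g 1" using rec_3k1 True by simp
      moreover have "g 8 = g 3 + g 4" by (rule step_low) (use True in auto)
      ultimately show ?thesis using val(1-5) m5 by simp
    next
      case False
      have "g (3 * k + 5) = g 2 + g 3 + g 4 + g 5" by (rule rec_quadruple) (use k False in auto)
      then show ?thesis using val(1-8) m5 k False by simp
    qed
  qed
  then show ?thesis by (simp add: g_def)
qed

lemma band_solution_kernel_init_vanish: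
  assumes k: "4 \<le> k" "k mod 3 = 1" and m: "2 * k + 6 \<le> m" "m < 3 * k + 6"
  shows "band_solution k (kernel_init a b) m = 0"
proof (cases "3 * k < m")
  case True
  with k m show ?thesis by (rule band_solution_kernel_init_vanish_top)
next
  case False
  then have "m = 2 * k + 6 + (m - (2 * k + 6))" "m - (2 * k + 6) + 6 \<le> k" using m by auto
  with k show ?thesis by (metis band_solution_kernel_init_vanish_middle)
qed

lemma band_solution_kernel_init_sum:
  assumes k: "4 \<le> k" "k mod 3 = 1"
  shows "sum (band_solution k (kernel_init a b)) {1..k} = 0"
proof -
  define g where "g = band_solution k (kernel_init a b)"
  note val = band_solution_kernel_init_values[OF k, where a = a and b = b, folded g_def]
  have "sum g {1..k} = g 1 + g 2 + g 3 + (\<Sum>i<k - 3. g (i + 4))"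
    using sum_split_first_three[of k g] k by simp
  also have "(\<Sum>i<k - 3. g (i + 4)) = sum (period3 a b) {..<k - 3}"
    using k by (intro sum.cong) (auto intro: val(9))
  also have "\<dots> = a" using k le_mod_geq[of 3 k] by (simp add: sum_period3)
  finally show ?thesis using val(2-4) by (simp add: g_def)
qed

lemma vec_mem_A_mat_kernel:
  assumes n: "0 < n" and rec: "\<And>i. Suc i < n \<Longrightarrow> band_rec k g i"
    and tail: "\<And>j. n \<le> j \<Longrightarrow> j < n + k \<Longrightarrow> g j = 0" and sum: "sum g {1..k} = 0"
  shows "vec n g \<in> mat_kernel (A_mat n k)"
proof -
  have agree: "zero_ext (vec n g) j = g j" if "j < n + k" for j
    using that tail by (cases "j < n") (auto simp: zero_ext_def)
  have "kernel_seq k n (zero_ext (vec n g))"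
  proof unfold_locales
    fix i assume "Suc i < n"
    then show "band_rec k (zero_ext (vec n g)) i"
      using rec[of i] unfolding band_rec_def by (cases "k \<le> i") (simp_all add: agree)
  next
    have "sum (zero_ext (vec n g)) {1..k} = sum g {1..k}"
      using n by (intro sum.cong) (auto intro: agree)
    then show "sum (zero_ext (vec n g)) {1..k} = 0" using sum by simp
  qed (simp add: zero_ext_def)
  then show ?thesis using A_mat_kernel_iff[of "vec n g" n k] n by simp
qed

definition kernel_vec :: "nat \<Rightarrow> real \<Rightarrow> real \<Rightarrow> real vec" where
  "kernel_vec k a b = vec (2 * k + 6) (band_solution k (kernel_init a b))"

lemma kernel_vec_mem:
  assumes "4 \<le> k" "k mod 3 = 1"
  shows "kernel_vec k a b \<in> mat_kernel (A_mat (2 * k + 6) k)"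
  unfolding kernel_vec_def
proof (rule vec_mem_A_mat_kernel)
  show "band_rec k (band_solution k (kernel_init a b)) i" for i
    using assms by (simp add: band_rec_band_solution)
qed (use assms band_solution_kernel_init_vanish band_solution_kernel_init_sum in auto)

lemma kernel_vec_nth: "kernel_vec k a b $ 0 = a" "0 < k \<Longrightarrow> kernel_vec k a b $ 1 = b"
  by (simp_all add: kernel_vec_def band_solution_initial kernel_init_def period3_def)

lemma A_mat_kernel_eq_zero:
  assumes k: "2 < k" and x: "x \<in> mat_kernel (A_mat (2 * k + 6) k)"
    and pinned: "k mod 3 = 1 \<Longrightarrow> x $ 0 = 0 \<and> x $ 1 = 0"
  shows "x = 0\<^sub>v (2 * k + 6)"
proof -
  let ?f = "zero_ext x"
  have A: "A_mat (2 * k + 6) k \<in> carrier_mat (2 * k + 6) (2 * k + 6)" by (simp add: A_mat_def)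
  have xc: "x \<in> carrier_vec (2 * k + 6)" using mat_kernel_carrier[OF A] x by auto
  interpret kernel_seq k "2 * k + 6" ?f using A_mat_kernel_iff[OF xc] x by simp
  have pinned': "k mod 3 = 1 \<Longrightarrow> ?f 0 = 0 \<and> ?f 1 = 0" using pinned xc by (simp add: zero_ext_def)
  have initial_zero: "?f j = 0" if "j \<le> k" for j
  proof -
    consider "k = 3" | "k = 4" | "5 \<le> k" using k by linarith
    then show ?thesis
    proof cases
      case 1
      with that have "j = 0 \<or> j = 1 \<or> j = 2 \<or> j = 3" by auto
      with 1 initial_zero_k3 show ?thesis by auto
    next
      case 2
      with that have "j = 0 \<or> j = 1 \<or> j = 2 \<or> j = 3 \<or> j = 4" by auto
      with 2 initial_zero_k4 pinned' show ?thesis by auto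
    next
      case 3
      with that pinned' show ?thesis by (intro initial_zero_ge5) simp_all
    qed
  qed
  have all_zero: "?f j = 0" for j by (rule zero_if_initial_zero) (use k initial_zero in auto)
  show ?thesis
  proof (rule eq_vecI)
    fix i assume "i < dim_vec (0\<^sub>v (2 * k + 6) :: real vec)"
    then show "x $ i = 0\<^sub>v (2 * k + 6) $ i" using all_zero[of i] xc by (simp add: zero_ext_def)
  qed (use xc in simp)
qed

theorem theorem8p6:
  fixes k :: nat
  assumes "k > 2"
  shows "N_null (2 * k + 6) k = (if k mod 3 = 1 then 2 else 0)"
proof -
  have A: "A_mat (2 * k + 6) k \<in> carrier_mat (2 * k + 6) (2 * k + 6)" by (simp add: A_mat_def)
  show ?thesis
  proof (cases "k mod 3 = 1")
    case True
    then have k4: "4 \<le> k" using assms by (cases "k = 3") auto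
    let ?u = "\<lambda>p::nat. kernel_vec k (if p = 0 then 1 else 0) (if p = 1 then 1 else 0)"
    have "kernel_dim (A_mat (2 * k + 6) k) = card {0, 1 :: nat}"
    proof (rule kernel_dim_eq_card[OF A, where u = ?u])
      show "?u p \<in> mat_kernel (A_mat (2 * k + 6) k)" for p by (rule kernel_vec_mem[OF k4 True])
      show "?u p $ q = (if p = q then 1 else 0)" if "p \<in> {0, 1}" "q \<in> {0, 1}" for p q
        using that kernel_vec_nth k4 by auto
      show "x = 0\<^sub>v (2 * k + 6)" if "x \<in> mat_kernel (A_mat (2 * k + 6) k)" "\<forall>p\<in>{0, 1}. x $ p = 0" for x
        using A_mat_kernel_eq_zero[OF assms that(1)] that(2) by simp
    qed auto
    with True show ?thesis by (simp add: N_null_def)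
  next
    case False
    have "kernel_dim (A_mat (2 * k + 6) k) = card ({} :: nat set)"
      by (rule kernel_dim_eq_card[OF A]) (use A_mat_kernel_eq_zero[OF assms] False in auto)
    with False show ?thesis by (simp add: N_null_def)
  qed
qed

end
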